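(* If $W\subseteq\ell^\infty$ is analytic with respect to the product topology on $\mathbb R^\omega$, then $\mathsf{HC}^*(W)=\bigcap_{w\in W}\mathsf{HC}(w)$ is a co-analytic subset of $\ell^2$.
   Context: $\omega=\{0,1,2,\dots\}$. $\ell^\infty$ is the set of bounded real sequences indexed by $\omega$, viewed as a subset of $\mathbb R^\omega$ with the product topology. $\ell^2$ is the Hilbert space of square-summable real sequences with its norm topology. For $w\in\ell^\infty$, $B_w:\ell^2\to\ell^2$ is $B_w(x)(i)=w(i)\,x(i+1)$. $\mathsf{HC}(w)$ is the set of $x\in\ell^2$ such that $\{B_w^k(x):k\in\omega\}$ is dense in $\ell^2$, and $\mathsf{HC}^*(W)=\bigcap_{w\in W}\mathsf{HC}(w)$. A set is analytic if it is a continuous image of a Borel subset of a Polish space, co-analytic if its complement is analytic. *)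

theory Defs
  imports "HOL-Analysis.Analysis"
begin

definition Polish_space :: "'a topology \<Rightarrow> bool" where
  "Polish_space X \<longleftrightarrow> completely_metrizable_space X \<and> separable_space X"

definition borel_sets_of :: "'a topology \<Rightarrow> 'a set set" where
  "borel_sets_of X = sigma_sets (topspace X) {U. openin X U}"

text \<open>Every Polish space is homeomorphic to a (subspace) topology on a subset
  of the type nat => real (it embeds in the Hilbert cube), so quantifying over Polish
  topologies on that type covers all Polish spaces up to homeomorphism.\<close>
definition analytic_in :: "'b topology \<Rightarrow> 'b set \<Rightarrow> bool" where
  "analytic_in X A \<longleftrightarrow>
     (\<exists>(Y :: (nat \<Rightarrow> real) topology) B f.
        Polish_space Y \<and> B \<in> borel_sets_of Y \<and>
        continuous_map (subtopology Y B) X f \<and> f ` B = A)"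

definition coanalytic_in :: "'b topology \<Rightarrow> 'b set \<Rightarrow> bool" where
  "coanalytic_in X A \<longleftrightarrow> A \<subseteq> topspace X \<and> analytic_in X (topspace X - A)"

definition linfty :: "(nat \<Rightarrow> real) set" where
  "linfty = {w. bounded (range w)}"

definition prod_top :: "(nat \<Rightarrow> real) topology" where
  "prod_top = product_topology (\<lambda>_. euclideanreal) UNIV"

definition l2 :: "(nat \<Rightarrow> real) set" where
  "l2 = {x. summable (\<lambda>i. (x i)\<^sup>2)}"

definition l2_norm :: "(nat \<Rightarrow> real) \<Rightarrow> real" where
  "l2_norm x = sqrt (\<Sum>i. (x i)\<^sup>2)"

definition l2_top :: "(nat \<Rightarrow> real) topology" where
  "l2_top = topology_generated_by
     {{y \<in> l2. l2_norm (y - x) < e} | x e. x \<in> l2 \<and> e > 0}"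

definition B :: "(nat \<Rightarrow> real) \<Rightarrow> (nat \<Rightarrow> real) \<Rightarrow> (nat \<Rightarrow> real)" where
  "B w x = (\<lambda>i. w i * x (Suc i))"

definition HC :: "(nat \<Rightarrow> real) \<Rightarrow> (nat \<Rightarrow> real) set" where
  "HC w = {x \<in> l2. l2_top closure_of (range (\<lambda>k. (B w ^^ k) x)) = l2}"

definition HC_star :: "(nat \<Rightarrow> real) set \<Rightarrow> (nat \<Rightarrow> real) set" where
  "HC_star W = {x \<in> l2. \<forall>w \<in> W. x \<in> HC w}"

end

theory Submission
  imports Defs
begin

(* The complement of HC*(W) in l2 is the projection to l2 of
   C = {(a, x) in A x l2. x not in HC (g a)}, where g maps a Borel subset A of a Polish space Y
   continuously onto W.  With D the countable dense set of finitely supported rational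
   sequences, x is not hypercyclic for w iff some c in D stays at distance more than 1/(m+1)
   from every B_w^k x, and such a distance exceeds 1/(m+1) iff one of its partial sums does.
   The orbit map (a, x) |-> B_(g a)^k x is not continuous into l2, but each partial sum
   depends only on finitely many coordinates of g a and of x, so it is continuous on A x l2.
   Hence C is Borel in the Polish space Y x l2, and its projection is analytic. *)

lemma topology_generated_by_base:
  assumes "\<And>V. V \<in> \<S> \<Longrightarrow> openin X V"
    and "\<And>U x. openin X U \<Longrightarrow> x \<in> U \<Longrightarrow> \<exists>V\<in>\<S>. x \<in> V \<and> V \<subseteq> U"
  shows "topology_generated_by \<S> = X"
  unfolding topology_eq openin_topology_generated_by_iff
proof (intro allI iffI)
  fix U assume "generate_topology_on \<S> U"
  then show "openin X U"
    by induction (use assms(1) in auto)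
next
  fix U assume "openin X U"
  then have "U = \<Union>{V \<in> \<S>. V \<subseteq> U}"
    using assms(2) by blast
  moreover have "generate_topology_on \<S> (\<Union>{V \<in> \<S>. V \<subseteq> U})"
    by (auto intro: generate_topology_on.UN generate_topology_on.Basis)
  ultimately show "generate_topology_on \<S> U"
    by simp
qed

lemma (in Metric_space) closure_of_ne_topspace_iff_apart:
  assumes "S \<subseteq> M" "D \<subseteq> M" and dense: "\<And>x e. x \<in> M \<Longrightarrow> e > 0 \<Longrightarrow> \<exists>c\<in>D. d x c < e"
  shows "mtopology closure_of S \<noteq> M \<longleftrightarrow> (\<exists>c\<in>D. \<exists>m. \<forall>z\<in>S. inverse (Suc m) < d c z)"
proof
  assume "mtopology closure_of S \<noteq> M"
  then obtain y r where "y \<in> M" "r > 0" and far: "\<And>z. z \<in> S \<Longrightarrow> r \<le> d y z"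
    using closure_of_subset_topspace[of mtopology S] assms(1)
    by (fastforce simp: metric_closure_of not_less)
  obtain c where "c \<in> D" "d y c < r / 2"
    using dense[OF \<open>y \<in> M\<close>, of "r / 2"] \<open>r > 0\<close> by auto
  obtain m where m: "inverse (Suc m) < r / 2"
    using reals_Archimedean[of "r / 2"] \<open>r > 0\<close> by auto
  have "inverse (Suc m) < d c z" if "z \<in> S" for z
  proof -
    have "d y z \<le> d y c + d c z"
      using triangle \<open>y \<in> M\<close> \<open>c \<in> D\<close> that assms(1,2) by blast
    then show ?thesis
      using far[OF that] \<open>d y c < r / 2\<close> m by linarith
  qed
  then show "\<exists>c\<in>D. \<exists>m. \<forall>z\<in>S. inverse (Suc m) < d c z"
    using \<open>c \<in> D\<close> by blast
next
  assume "\<exists>c\<in>D. \<exists>m. \<forall>z\<in>S. inverse (Suc m) < d c z"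
  then obtain c m where "c \<in> D" "\<And>z. z \<in> S \<Longrightarrow> inverse (Suc m) < d c z"
    by blast
  then have "c \<notin> mtopology closure_of S"
    unfolding metric_closure_of by (fastforce dest: spec[of _ "inverse (Suc m)"])
  then show "mtopology closure_of S \<noteq> M"
    using \<open>c \<in> D\<close> assms(2) by blast
qed

lemma sigma_algebra_borel_sets_of: "sigma_algebra (topspace X) (borel_sets_of X)"
  unfolding borel_sets_of_def by (rule sigma_algebra_sigma_sets) (auto dest: openin_subset)

lemma borel_sets_of_openin: "openin X U \<Longrightarrow> U \<in> borel_sets_of X"
  by (simp add: borel_sets_of_def sigma_sets.Basic)

lemma borel_sets_of_subset_topspace: "A \<in> borel_sets_of X \<Longrightarrow> A \<subseteq> topspace X"
  unfolding borel_sets_of_def by (rule sigma_sets_into_sp) (auto dest: openin_subset)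

lemma borel_sets_of_continuous_map_preimage:
  assumes f: "continuous_map X Y f" and A: "A \<in> borel_sets_of Y"
  shows "{x \<in> topspace X. f x \<in> A} \<in> borel_sets_of X"
proof -
  have "f \<in> topspace X \<rightarrow> topspace Y"
    using f by (simp add: continuous_map_funspace)
  then have "f -` A \<inter> topspace X \<in> sigma_sets (topspace X) {f -` U \<inter> topspace X | U. openin Y U}"
    using sigma_sets_vimage_commute[of f "topspace X" "topspace Y" "{U. openin Y U}"] A
    by (auto simp: borel_sets_of_def)
  also have "\<dots> \<subseteq> borel_sets_of X"
    unfolding borel_sets_of_def
    using openin_continuous_map_preimage[OF f]
    by (intro sigma_sets_mono') (auto simp: vimage_def Int_def conj_commute)
  finally show ?thesis
    by (simp add: vimage_def Int_def conj_commute)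
qed

lemma borel_sets_of_openin_subtopology:
  assumes "openin (subtopology X S) U" "S \<in> borel_sets_of X"
  shows "U \<in> borel_sets_of X"
proof -
  interpret sigma_algebra "topspace X" "borel_sets_of X"
    by (rule sigma_algebra_borel_sets_of)
  obtain V where "openin X V" "U = S \<inter> V"
    using assms(1) by (auto simp: openin_subtopology)
  then show ?thesis
    using assms(2) borel_sets_of_openin by blast
qed

lemma separable_space_prod_topology:
  assumes "separable_space X" "separable_space Y"
  shows "separable_space (prod_topology X Y)"
proof -
  obtain C where "countable C" "C \<subseteq> topspace X" "X closure_of C = topspace X"
    using assms(1) unfolding separable_space_def by blast
  moreover obtain D where "countable D" "D \<subseteq> topspace Y" "Y closure_of D = topspace Y"
    using assms(2) unfolding separable_space_def by blast
  ultimately show ?thesis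
    unfolding separable_space_def
    by (intro exI[of _ "C \<times> D"]) (auto simp: closure_of_Times)
qed

lemma Polish_space_prod_topology:
  "Polish_space X \<Longrightarrow> Polish_space Y \<Longrightarrow> Polish_space (prod_topology X Y)"
  by (simp add: Polish_space_def completely_metrizable_space_prod_topology
      separable_space_prod_topology)

definition deinterleave :: "(nat \<Rightarrow> 'a) \<Rightarrow> (nat \<Rightarrow> 'a) \<times> (nat \<Rightarrow> 'a)" where
  "deinterleave h = (\<lambda>n. h (2 * n), \<lambda>n. h (2 * n + 1))"

definition interleave :: "(nat \<Rightarrow> 'a) \<times> (nat \<Rightarrow> 'a) \<Rightarrow> nat \<Rightarrow> 'a" where
  "interleave p m = (if even m then fst p (m div 2) else snd p (m div 2))"

lemma deinterleave_interleave [simp]: "deinterleave (interleave p) = p"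
  by (simp add: deinterleave_def interleave_def)

lemma interleave_deinterleave [simp]: "interleave (deinterleave h) = h"
proof
  fix m
  show "interleave (deinterleave h) m = h m"
    by (cases "even m") (simp_all add: deinterleave_def interleave_def)
qed

lemma homeomorphic_maps_deinterleave:
  "homeomorphic_maps (pullback_topology UNIV deinterleave X) X deinterleave interleave"
  unfolding homeomorphic_maps_def
proof (intro conjI ballI)
  show "continuous_map (pullback_topology UNIV deinterleave X) X deinterleave"
    using continuous_map_pullback[OF continuous_map_id, of UNIV deinterleave X] by simp
  show "continuous_map X (pullback_topology UNIV deinterleave X) interleave"
    by (rule continuous_map_pullback') (simp_all add: o_def)
qed simp_all

(* analytic_in only admits Polish topologies on nat => real; deinterleave transports P to one. *)
lemma analytic_in_continuous_image:
  fixes P :: "((nat \<Rightarrow> real) \<times> (nat \<Rightarrow> real)) topology"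
  assumes "Polish_space P" "C \<in> borel_sets_of P" "continuous_map (subtopology P C) X f"
  shows "analytic_in X (f ` C)"
proof -
  define Y where "Y = pullback_topology UNIV deinterleave P"
  have hom: "homeomorphic_maps Y P deinterleave interleave"
    unfolding Y_def by (rule homeomorphic_maps_deinterleave)
  then have "Y homeomorphic_space P"
    unfolding homeomorphic_space_def by blast
  then have "Polish_space Y"
    using assms(1) homeomorphic_completely_metrizable_space homeomorphic_separable_space
    unfolding Polish_space_def by blast
  have de: "continuous_map Y P deinterleave"
    using hom by (simp add: homeomorphic_maps_def)
  define C' where "C' = {h \<in> topspace Y. deinterleave h \<in> C}"
  have "C' \<in> borel_sets_of Y"
    unfolding C'_def by (rule borel_sets_of_continuous_map_preimage[OF de assms(2)])
  moreover have "continuous_map (subtopology Y C') X (f \<circ> deinterleave)"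
    by (intro continuous_map_compose[OF _ assms(3)] continuous_map_into_subtopology
        continuous_map_from_subtopology de) (auto simp: C'_def)
  moreover have "(f \<circ> deinterleave) ` C' = f ` C"
  proof -
    have "p \<in> deinterleave ` C'" if "p \<in> C" for p
    proof
      show "p = deinterleave (interleave p)"
        by simp
      show "interleave p \<in> C'"
        using that borel_sets_of_subset_topspace[OF assms(2)]
        by (auto simp: C'_def Y_def topspace_pullback_topology)
    qed
    then have "deinterleave ` C' = C"
      by (auto simp: C'_def)
    then show ?thesis
      by (metis image_comp)
  qed
  ultimately show ?thesis
    unfolding analytic_in_def using \<open>Polish_space Y\<close> by blast
qed

section \<open>The Hilbert space l2\<close>

lemma L2_set_le_l2_norm:
  assumes "x \<in> l2"
  shows "L2_set x {..<n} \<le> l2_norm x"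
  unfolding L2_set_def l2_norm_def
  using assms by (intro real_sqrt_le_mono sum_le_suminf) (auto simp: l2_def)

lemma l2_norm_le_if_L2_set_le:
  assumes "\<And>n. L2_set x {..<n} \<le> e"
  shows "x \<in> l2" and "l2_norm x \<le> e"
proof -
  have e: "0 \<le> e" using assms[of 0] by simp
  have partial: "(\<Sum>i<n. (x i)\<^sup>2) \<le> e\<^sup>2" for n
    using assms[of n] e by (simp add: L2_set_def real_sqrt_le_iff' sqrt_le_D)
  show "x \<in> l2"
    unfolding l2_def mem_Collect_eq by (rule summableI_nonneg_bounded) (use partial in auto)
  then have "(\<Sum>i. (x i)\<^sup>2) \<le> e\<^sup>2"
    using partial by (intro suminf_le_const) (auto simp: l2_def)
  then show "l2_norm x \<le> e"
    unfolding l2_norm_def using e real_sqrt_le_mono by fastforce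
qed

lemma less_l2_norm_iff:
  assumes "x \<in> l2"
  shows "r < l2_norm x \<longleftrightarrow> (\<exists>n. r < L2_set x {..<n})"
  using L2_set_le_l2_norm[OF assms] l2_norm_le_if_L2_set_le(2)[of x r]
  by (meson not_le order.strict_trans2)

lemma abs_le_l2_norm:
  assumes "x \<in> l2"
  shows "\<bar>x i\<bar> \<le> l2_norm x"
proof -
  have "\<bar>x i\<bar> \<le> L2_set x {..<Suc i}"
    using member_le_L2_set[of "{..<Suc i}" i "\<lambda>i. \<bar>x i\<bar>"] by (simp add: L2_set_def)
  then show ?thesis using L2_set_le_l2_norm[OF assms] by (rule order.trans)
qed

lemma l2_norm_diff_le:
  assumes "x \<in> l2" "y \<in> l2"
  shows "x - y \<in> l2" and "l2_norm (x - y) \<le> l2_norm x + l2_norm y"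
proof -
  have "L2_set (x - y) {..<n} \<le> l2_norm x + l2_norm y" for n
  proof -
    have "L2_set (x - y) {..<n} \<le> L2_set x {..<n} + L2_set (\<lambda>i. - y i) {..<n}"
      using L2_set_triangle_ineq[of x "\<lambda>i. - y i"] by (simp add: fun_diff_def)
    also have "\<dots> \<le> l2_norm x + l2_norm y"
      using L2_set_le_l2_norm[OF assms(1)] L2_set_le_l2_norm[OF assms(2)]
      by (simp add: L2_set_def add_mono)
    finally show ?thesis .
  qed
  then show "x - y \<in> l2" and "l2_norm (x - y) \<le> l2_norm x + l2_norm y"
    by (fact l2_norm_le_if_L2_set_le)+
qed

lemma l2_norm_minus_commute: "l2_norm (x - y) = l2_norm (y - x)"
  by (simp add: l2_norm_def power2_commute)

(* The junk value 0 off l2 keeps l2_dist nonnegative and symmetric everywhere, as the locale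
   Metric_space demands. *)
definition l2_dist :: "(nat \<Rightarrow> real) \<Rightarrow> (nat \<Rightarrow> real) \<Rightarrow> real" where
  "l2_dist x y = (if x \<in> l2 \<and> y \<in> l2 then l2_norm (x - y) else 0)"

lemma l2_dist_commute: "l2_dist x y = l2_dist y x"
  by (auto simp: l2_dist_def l2_norm_minus_commute)

lemma abs_le_l2_dist:
  assumes "x \<in> l2" "y \<in> l2"
  shows "\<bar>x i - y i\<bar> \<le> l2_dist x y"
  using abs_le_l2_norm[OF l2_norm_diff_le(1)[OF assms]] assms by (simp add: l2_dist_def)

lemma less_l2_dist_iff:
  assumes "x \<in> l2" "y \<in> l2"
  shows "r < l2_dist x y \<longleftrightarrow> (\<exists>n. r < L2_set (\<lambda>i. x i - y i) {..<n})"
proof -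
  have "L2_set (x - y) = L2_set (\<lambda>i. x i - y i)"
    by (simp add: fun_diff_def)
  then show ?thesis
    using less_l2_norm_iff[OF l2_norm_diff_le(1)[OF assms]] assms by (simp add: l2_dist_def)
qed

lemma Metric_space_l2: "Metric_space l2 l2_dist"
proof
  fix x y z assume xyz: "x \<in> l2" "y \<in> l2" "z \<in> l2"
  show "l2_dist x y = 0 \<longleftrightarrow> x = y"
    using abs_le_l2_dist[OF xyz(1,2)] xyz by (auto simp: l2_dist_def l2_norm_def fun_eq_iff)
  show "l2_dist x z \<le> l2_dist x y + l2_dist y z"
    using l2_norm_diff_le(2)[OF l2_norm_diff_le(1)[OF xyz(1,2)] l2_norm_diff_le(1)[OF xyz(3,2)]] xyz
    by (simp add: l2_dist_def l2_norm_def fun_diff_def power2_commute[of "z _"])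
qed (use L2_set_le_l2_norm[of _ 0] l2_norm_diff_le(1) l2_dist_commute in \<open>auto simp: l2_dist_def\<close>)

interpretation l2: Metric_space l2 l2_dist
  by (rule Metric_space_l2)

lemma l2_top_eq_mtopology: "l2_top = l2.mtopology"
  unfolding l2_top_def
proof (rule topology_generated_by_base)
  have ball_eq: "{y \<in> l2. l2_norm (y - x) < e} = l2.mball x e" if "x \<in> l2" for x e
    using that by (auto simp: l2_dist_def l2_norm_minus_commute[of x])
  show "openin l2.mtopology V" if "V \<in> {{y \<in> l2. l2_norm (y - x) < e} | x e. x \<in> l2 \<and> e > 0}" for V
    using that ball_eq by auto
  show "\<exists>V \<in> {{y \<in> l2. l2_norm (y - x) < e} | x e. x \<in> l2 \<and> e > 0}. x \<in> V \<and> V \<subseteq> U"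
    if "openin l2.mtopology U" "x \<in> U" for U x
    using that ball_eq unfolding l2.openin_mtopology
    by (metis (mono_tags, lifting) l2.centre_in_mball_iff mem_Collect_eq subsetD)
qed

lemma topspace_l2_top [simp]: "topspace l2_top = l2"
  by (simp add: l2_top_eq_mtopology)

lemma continuous_map_l2_top_coordinate: "continuous_map l2_top euclideanreal (\<lambda>x. x i)"
  unfolding l2_top_eq_mtopology l2.continuous_map_from_metric
proof (intro conjI ballI allI impI)
  fix a U assume "a \<in> l2" and "openin euclideanreal U \<and> a i \<in> U"
  then obtain e where "e > 0" and e: "\<And>y. dist y (a i) < e \<Longrightarrow> y \<in> U"
    using open_dist[of U] by auto
  moreover have "x i \<in> U" if "x \<in> l2 \<and> l2_dist a x < e" for x
    using e abs_le_l2_dist[OF \<open>a \<in> l2\<close>, of x i] that by (simp add: dist_real_def abs_minus_commute)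
  ultimately show "\<exists>r>0. \<forall>x. x \<in> l2 \<and> l2_dist a x < r \<longrightarrow> x i \<in> U"
    by blast
qed auto

lemma l2_MCauchy_tendsto_coordinatewise_limit:
  assumes Cauchy: "l2.MCauchy \<sigma>" and y: "\<And>i. (\<lambda>n. \<sigma> n i) \<longlonglongrightarrow> y i" and "e > 0"
  shows "\<exists>N. \<forall>n\<ge>N. \<sigma> n - y \<in> l2 \<and> l2_norm (\<sigma> n - y) \<le> e"
proof -
  have \<sigma>: "\<sigma> n \<in> l2" for n
    using Cauchy by (auto simp: l2.MCauchy_def)
  obtain N where N: "\<forall>m n. N \<le> m \<longrightarrow> N \<le> n \<longrightarrow> l2_dist (\<sigma> m) (\<sigma> n) < e"
    using Cauchy \<open>e > 0\<close> by (auto simp: l2.MCauchy_def)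
  have "L2_set (\<sigma> n - y) {..<K} \<le> e" if "n \<ge> N" for n K
  proof (rule tendsto_upperbound)
    show "(\<lambda>m. L2_set (\<sigma> n - \<sigma> m) {..<K}) \<longlonglongrightarrow> L2_set (\<sigma> n - y) {..<K}"
      unfolding L2_set_def fun_diff_def by (intro tendsto_intros y)
    have "L2_set (\<sigma> n - \<sigma> m) {..<K} \<le> e" if "m \<ge> N" for m
      using L2_set_le_l2_norm[OF l2_norm_diff_le(1)[OF \<sigma> \<sigma>], of n m K] N \<open>n \<ge> N\<close> that \<sigma>
      by (fastforce simp: l2_dist_def)
    then show "\<forall>\<^sub>F m in sequentially. L2_set (\<sigma> n - \<sigma> m) {..<K} \<le> e"
      by (auto simp: eventually_sequentially)
  qed simp
  then show ?thesis
    using l2_norm_le_if_L2_set_le by blast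
qed

lemma l2_mcomplete: "l2.mcomplete"
  unfolding l2.mcomplete_def
proof (intro allI impI)
  fix \<sigma> assume Cauchy: "l2.MCauchy \<sigma>"
  then have \<sigma>: "\<sigma> n \<in> l2" for n
    by (auto simp: l2.MCauchy_def)
  have "Cauchy (\<lambda>n. \<sigma> n i)" for i
  proof (rule metric_CauchyI)
    fix e :: real assume "e > 0"
    then obtain N where "\<forall>m n. N \<le> m \<longrightarrow> N \<le> n \<longrightarrow> l2_dist (\<sigma> m) (\<sigma> n) < e"
      using Cauchy by (auto simp: l2.MCauchy_def)
    then show "\<exists>N. \<forall>m\<ge>N. \<forall>n\<ge>N. dist (\<sigma> m i) (\<sigma> n i) < e"
      using abs_le_l2_dist[OF \<sigma> \<sigma>] unfolding dist_real_def by (blast intro: order.strict_trans1)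
  qed
  then have "\<forall>i. \<exists>l. (\<lambda>n. \<sigma> n i) \<longlonglongrightarrow> l"
    by (simp add: Cauchy_convergent_iff convergent_def)
  then obtain y where y: "\<And>i. (\<lambda>n. \<sigma> n i) \<longlonglongrightarrow> y i"
    by metis
  note close = l2_MCauchy_tendsto_coordinatewise_limit[OF Cauchy y]
  obtain N where "\<sigma> N - y \<in> l2"
    using close[of 1] by auto
  then have "y \<in> l2"
    using l2_norm_diff_le(1)[OF \<sigma>[of N], of "\<sigma> N - y"] by (simp add: fun_diff_def)
  have "\<forall>\<^sub>F n in sequentially. \<sigma> n \<in> l2 \<and> l2_dist (\<sigma> n) y < e" if "e > 0" for e
  proof -
    obtain N where "\<forall>n\<ge>N. \<sigma> n - y \<in> l2 \<and> l2_norm (\<sigma> n - y) \<le> e / 2"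
      using close[of "e / 2"] \<open>e > 0\<close> by auto
    then show ?thesis
      using \<sigma> \<open>y \<in> l2\<close> \<open>e > 0\<close> unfolding eventually_sequentially
      by (force simp: l2_dist_def)
  qed
  then show "\<exists>y. limitin l2.mtopology \<sigma> y sequentially"
    using \<open>y \<in> l2\<close> by (auto simp: l2.limitin_metric)
qed

lemma power2_l2_dist:
  assumes "x \<in> l2" "y \<in> l2"
  shows "(l2_dist x y)\<^sup>2 = (\<Sum>i. (x i - y i)\<^sup>2)"
  using l2_norm_diff_le(1)[OF assms] assms
  by (simp add: l2_dist_def l2_norm_def l2_def suminf_nonneg)

lemma ex_rat_power2_diff_less:
  fixes x \<delta> :: real
  assumes "\<delta> > 0"
  shows "\<exists>q\<in>\<rat>. (x - q)\<^sup>2 < \<delta>"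
proof -
  obtain q where "q \<in> \<rat>" "x < q" "q < x + sqrt \<delta>"
    using Rats_dense_in_real[of x "x + sqrt \<delta>"] assms by auto
  then have "(q - x)\<^sup>2 < (sqrt \<delta>)\<^sup>2"
    by (intro power_strict_mono) auto
  then show ?thesis
    using \<open>q \<in> \<rat>\<close> assms by (auto simp: power2_commute)
qed

definition rat_fin_seqs :: "(nat \<Rightarrow> real) set" where
  "rat_fin_seqs = (\<lambda>qs i. if i < length qs then qs ! i else 0) ` lists \<rat>"

lemma countable_rat_fin_seqs: "countable rat_fin_seqs"
  unfolding rat_fin_seqs_def using countable_rat by blast

lemma rat_fin_seqs_subset_l2: "rat_fin_seqs \<subseteq> l2"
proof
  fix c assume "c \<in> rat_fin_seqs"
  then obtain qs where "c = (\<lambda>i. if i < length qs then qs ! i else 0)"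
    by (auto simp: rat_fin_seqs_def)
  then show "c \<in> l2"
    unfolding l2_def by (auto intro!: summable_finite[of "{..<length qs}"] split: if_splits)
qed

lemma rat_fin_seqs_dense:
  assumes "x \<in> l2" "e > 0"
  shows "\<exists>c\<in>rat_fin_seqs. l2_dist x c < e"
proof -
  have summable: "summable (\<lambda>i. (x i)\<^sup>2)"
    using assms(1) by (simp add: l2_def)
  obtain K where K: "(\<Sum>i. (x i)\<^sup>2) - e\<^sup>2 / 2 < (\<Sum>i<K. (x i)\<^sup>2)"
    using order_tendstoD(1)[OF summable_LIMSEQ[OF summable], of "(\<Sum>i. (x i)\<^sup>2) - e\<^sup>2 / 2"] \<open>e > 0\<close>
    by (auto simp: eventually_sequentially)
  define \<delta> where "\<delta> = e\<^sup>2 / (2 * (real K + 1))"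
  have "\<delta> > 0"
    using \<open>e > 0\<close> by (simp add: \<delta>_def)
  have "\<forall>i. \<exists>q. q \<in> \<rat> \<and> (x i - q)\<^sup>2 < \<delta>"
    using ex_rat_power2_diff_less[OF \<open>\<delta> > 0\<close>] by blast
  then obtain q where q: "\<And>i. q i \<in> \<rat>" "\<And>i. (x i - q i)\<^sup>2 < \<delta>"
    by metis
  define c where "c i = (if i < K then q i else 0)" for i
  have "map q [0..<K] \<in> lists \<rat>"
    and "c = (\<lambda>i. if i < length (map q [0..<K]) then map q [0..<K] ! i else 0)"
    using q(1) by (auto simp: c_def)
  then have c: "c \<in> rat_fin_seqs"
    unfolding rat_fin_seqs_def by blast
  then have "c \<in> l2"
    using rat_fin_seqs_subset_l2 by blast
  have "(l2_dist x c)\<^sup>2 = (\<Sum>n. (x (n + K) - c (n + K))\<^sup>2) + (\<Sum>i<K. (x i - c i)\<^sup>2)"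
    using power2_l2_dist[OF assms(1) \<open>c \<in> l2\<close>] l2_norm_diff_le(1)[OF assms(1) \<open>c \<in> l2\<close>]
      suminf_split_initial_segment[of "\<lambda>i. (x i - c i)\<^sup>2" K]
    by (simp add: l2_def fun_diff_def)
  also have "(\<Sum>n. (x (n + K) - c (n + K))\<^sup>2) = (\<Sum>i. (x i)\<^sup>2) - (\<Sum>i<K. (x i)\<^sup>2)"
    using suminf_split_initial_segment[OF summable, of K] by (simp add: c_def)
  also have "(\<Sum>i<K. (x i - c i)\<^sup>2) \<le> real K * \<delta>"
    using sum_mono[of "{..<K}" "\<lambda>i. (x i - c i)\<^sup>2" "\<lambda>_. \<delta>"] q(2) by (simp add: c_def less_imp_le)
  also have "real K * \<delta> \<le> e\<^sup>2 / 2"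
    using \<open>e > 0\<close> by (simp add: \<delta>_def field_simps)
  finally have "(l2_dist x c)\<^sup>2 < e\<^sup>2"
    using K by linarith
  then have "l2_dist x c < e"
    using \<open>e > 0\<close> power2_less_imp_less[of "l2_dist x c" e] by simp
  with c show ?thesis
    by blast
qed

lemma Polish_space_l2_top: "Polish_space l2_top"
  unfolding Polish_space_def
proof
  show "completely_metrizable_space l2_top"
    unfolding l2_top_eq_mtopology
    by (rule l2.completely_metrizable_space_mtopology[OF l2_mcomplete])
  have "\<forall>r>0. \<exists>c\<in>rat_fin_seqs. c \<in> l2 \<and> l2_dist x c < r" if "x \<in> l2" for x
    using rat_fin_seqs_dense[OF that] rat_fin_seqs_subset_l2 by blast
  then have "l2_top closure_of rat_fin_seqs = l2"
    unfolding l2_top_eq_mtopology l2.metric_closure_of by auto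
  then show "separable_space l2_top"
    unfolding separable_space_def
    using countable_rat_fin_seqs rat_fin_seqs_subset_l2 by auto
qed

section \<open>Hypercyclic vectors of weighted backward shifts\<close>

lemma B_power_apply: "(B w ^^ k) x i = (\<Prod>j<k. w (i + j)) * x (i + k)"
proof (induction k arbitrary: i)
  case (Suc k)
  have "(B w ^^ Suc k) x i = w i * ((\<Prod>j<k. w (Suc i + j)) * x (Suc i + k))"
    by (simp add: B_def Suc.IH)
  also have "\<dots> = (\<Prod>j<Suc k. w (i + j)) * x (i + Suc k)"
    by (simp add: prod.lessThan_Suc_shift del: prod.lessThan_Suc)
  finally show ?case .
qed simp

lemma B_in_l2:
  assumes "w \<in> linfty" "x \<in> l2"
  shows "B w x \<in> l2"
proof -
  obtain M where M: "\<And>i. \<bar>w i\<bar> \<le> M"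
    using assms(1) unfolding linfty_def bounded_iff by auto
  have bound: "summable (\<lambda>i. M\<^sup>2 * (x (Suc i))\<^sup>2)"
    using assms(2) summable_Suc_iff[of "\<lambda>i. (x i)\<^sup>2"] by (simp add: l2_def)
  have "(w i)\<^sup>2 \<le> M\<^sup>2" for i
    using power_mono[OF M[of i] abs_ge_zero, of 2] by simp
  then have "norm ((B w x i)\<^sup>2) \<le> M\<^sup>2 * (x (Suc i))\<^sup>2" for i
    by (simp add: B_def power_mult_distrib mult_right_mono)
  then show ?thesis
    unfolding l2_def by (auto intro: summable_comparison_test'[OF bound])
qed

lemma B_power_in_l2: "w \<in> linfty \<Longrightarrow> x \<in> l2 \<Longrightarrow> (B w ^^ k) x \<in> l2"
  by (induction k) (simp_all add: B_in_l2)

lemma not_in_HC_iff: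
  assumes "w \<in> linfty" "x \<in> l2"
  shows "x \<notin> HC w \<longleftrightarrow>
    (\<exists>c\<in>rat_fin_seqs. \<exists>m. \<forall>k. \<exists>n. inverse (Suc m) < L2_set (\<lambda>i. c i - (B w ^^ k) x i) {..<n})"
proof -
  have "range (\<lambda>k. (B w ^^ k) x) \<subseteq> l2"
    using B_power_in_l2[OF assms] by blast
  then have "x \<notin> HC w \<longleftrightarrow>
      (\<exists>c\<in>rat_fin_seqs. \<exists>m. \<forall>k. inverse (Suc m) < l2_dist c ((B w ^^ k) x))"
    using l2.closure_of_ne_topspace_iff_apart[OF _ rat_fin_seqs_subset_l2 rat_fin_seqs_dense]
      assms(2)
    by (simp add: HC_def l2_top_eq_mtopology)
  moreover have "r < l2_dist c ((B w ^^ k) x) \<longleftrightarrow> (\<exists>n. r < L2_set (\<lambda>i. c i - (B w ^^ k) x i) {..<n})"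
    if "c \<in> rat_fin_seqs" for c k r
    using less_l2_dist_iff[OF subsetD[OF rat_fin_seqs_subset_l2 that] B_power_in_l2[OF assms]] .
  ultimately show ?thesis
    by auto
qed

lemma continuous_map_orbit_partial_sum:
  assumes "continuous_map (subtopology Y A) prod_top g"
  shows "continuous_map (subtopology (prod_topology Y l2_top) (A \<times> l2)) euclideanreal
    (\<lambda>p. L2_set (\<lambda>i. c i - (B (g (fst p)) ^^ k) (snd p) i) {..<n})"
proof -
  let ?S = "subtopology (prod_topology Y l2_top) (A \<times> l2)"
  have weight: "continuous_map ?S euclideanreal (\<lambda>p. g (fst p) i)" for i
  proof -
    have "continuous_map ?S (subtopology Y A) fst"
      by (intro continuous_map_into_subtopology continuous_map_from_subtopology continuous_map_fst)
        auto
    then have "continuous_map ?S prod_top (g \<circ> fst)"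
      using assms by (rule continuous_map_compose)
    then show ?thesis
      using continuous_map_compose[OF _ continuous_map_product_projection[of i UNIV]]
      by (simp add: prod_top_def o_def)
  qed
  have point: "continuous_map ?S euclideanreal (\<lambda>p. snd p i)" for i
    using continuous_map_compose[OF continuous_map_snd continuous_map_l2_top_coordinate]
    by (intro continuous_map_from_subtopology) (simp add: o_def)
  show ?thesis
    unfolding L2_set_def B_power_apply by (intro continuous_intros weight point) auto
qed

lemma borel_sets_of_non_hypercyclic_pairs:
  assumes g: "continuous_map (subtopology Y A) prod_top g"
    and A: "A \<in> borel_sets_of Y" and bounded: "g ` A \<subseteq> linfty"
  shows "{p \<in> A \<times> l2. snd p \<notin> HC (g (fst p))} \<in> borel_sets_of (prod_topology Y l2_top)"
proof -
  let ?P = "prod_topology Y l2_top"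
  interpret sigma_algebra "topspace ?P" "borel_sets_of ?P"
    by (rule sigma_algebra_borel_sets_of)
  have "A \<subseteq> topspace Y"
    using A by (rule borel_sets_of_subset_topspace)
  then have "{p \<in> topspace ?P. fst p \<in> A} = A \<times> l2"
    by auto
  then have "A \<times> l2 \<in> borel_sets_of ?P"
    using borel_sets_of_continuous_map_preimage[OF continuous_map_fst[of Y l2_top] A] by simp
  define partial_dist where
    "partial_dist c k n p = L2_set (\<lambda>i. c i - (B (g (fst p)) ^^ k) (snd p) i) {..<n}" for c k n p
  have "topspace (subtopology ?P (A \<times> l2)) = A \<times> l2"
    using \<open>A \<subseteq> topspace Y\<close> by auto
  moreover have "openin (subtopology ?P (A \<times> l2))
      {p \<in> topspace (subtopology ?P (A \<times> l2)). partial_dist c k n p \<in> {r<..}}" for c k n r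
    unfolding partial_dist_def
    by (rule openin_continuous_map_preimage[OF continuous_map_orbit_partial_sum[OF g]]) simp
  ultimately have basic: "{p \<in> A \<times> l2. r < partial_dist c k n p} \<in> borel_sets_of ?P" for c k n r
    using borel_sets_of_openin_subtopology[OF _ \<open>A \<times> l2 \<in> borel_sets_of ?P\<close>] by simp
  have "{p \<in> A \<times> l2. snd p \<notin> HC (g (fst p))}
      = (\<Union>c\<in>rat_fin_seqs. \<Union>m. \<Inter>k. \<Union>n. {p \<in> A \<times> l2. inverse (Suc m) < partial_dist c k n p})"
  proof (rule set_eqI)
    fix p
    have "snd p \<notin> HC (g (fst p)) \<longleftrightarrow>
        (\<exists>c\<in>rat_fin_seqs. \<exists>m. \<forall>k. \<exists>n. inverse (Suc m) < partial_dist c k n p)"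
      if "p \<in> A \<times> l2"
    proof -
      have "g (fst p) \<in> linfty" "snd p \<in> l2"
        using that bounded by auto
      then show ?thesis
        using not_in_HC_iff by (simp add: partial_dist_def)
    qed
    then show "p \<in> {p \<in> A \<times> l2. snd p \<notin> HC (g (fst p))} \<longleftrightarrow>
      p \<in> (\<Union>c\<in>rat_fin_seqs. \<Union>m. \<Inter>k. \<Union>n. {p \<in> A \<times> l2. inverse (Suc m) < partial_dist c k n p})"
      by (cases "p \<in> A \<times> l2") simp_all
  qed
  also have "\<dots> \<in> borel_sets_of ?P"
    using countable_rat_fin_seqs basic by (intro countable_UN'' countable_nat_UN countable_INT) auto
  finally show ?thesis .
qed

theorem proposition1:
  assumes "W \<subseteq> linfty"
    and "analytic_in prod_top W"
  shows "coanalytic_in l2_top (HC_star W)"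
proof -
  obtain Y :: "(nat \<Rightarrow> real) topology" and A g where
    "Polish_space Y" and A: "A \<in> borel_sets_of Y"
    and g: "continuous_map (subtopology Y A) prod_top g" and "g ` A = W"
    using assms(2) unfolding analytic_in_def by blast
  let ?P = "prod_topology Y l2_top"
  let ?C = "{p \<in> A \<times> l2. snd p \<notin> HC (g (fst p))}"
  have "Polish_space ?P"
    using \<open>Polish_space Y\<close> Polish_space_l2_top by (rule Polish_space_prod_topology)
  moreover have "?C \<in> borel_sets_of ?P"
    using borel_sets_of_non_hypercyclic_pairs[OF g A] \<open>g ` A = W\<close> assms(1) by simp
  moreover have "continuous_map (subtopology ?P ?C) l2_top snd"
    by (rule continuous_map_from_subtopology[OF continuous_map_snd])
  ultimately have "analytic_in l2_top (snd ` ?C)"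
    by (rule analytic_in_continuous_image)
  moreover have "snd ` ?C = topspace l2_top - HC_star W"
    using \<open>g ` A = W\<close> by (auto simp: HC_star_def image_iff)
  ultimately show ?thesis
    by (auto simp: coanalytic_in_def HC_star_def)
qed

end
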